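(* Let $X$ be a real-valued random process on $\mathbb{R}$ with stationary increments and let $\psi$ be a wavelet as described in the context, with all moments below finite. Suppose $X$ is self-similar up to the scale $2^J$ in the following sense: for every integer $\ell\geq 0$ there exists a real random variable $A_\ell$, log infinitely divisible and independent of $X$, such that $$\{X\star\psi_j(t)\}_{j\leq J,\,t}\overset{d}{=}A_\ell\,\{X\star\psi_{j-\ell}(2^{-\ell}t)\}_{j\leq J,\,t}$$ (equality of all finite-dimensional joint distributions). Then there exist constants $c_1,c_2,\zeta_1,\zeta_2$ such that for all integers $j\leq J$, $$\mathbb{E}\{|X\star\psi_j(t)|\}=c_1 2^{j\zeta_1},\qquad \mathbb{E}\{|X\star\psi_j(t)|^2\}=c_2 2^{j\zeta_2},$$ and for all $\tau\in\mathbb{R}$, all integers $j\leq J$ and all $a\in\mathbb{Z}$, $$C_{\rho W}(\tau;j,a)=C_{\rho W}(\tau;0,a).$$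
   Context: A wavelet $\psi:\mathbb{R}\to\mathbb{C}$ has fast decay away from $t=0$, zero average, $\int|\psi|^2=1$, and a real-valued Fourier transform. For $j\in\mathbb{Z}$, $\psi_j(t)=2^{-j}\psi(2^{-j}t)$ and $WX(t,j)=X\star\psi_j(t)$, which is stationary in $t$. For $z\in\mathbb{C}$, $\rho(z)=(z,|z|)$. The wavelet spectrum is $\sigma_W^2(j)=\mathbb{E}\{|X\star\psi_j(t)|^2\}$. The normalized phase-modulus correlation is the $2\times2$ matrix $$C_{\rho W}(\tau;j,a)=\frac{\mathbb{E}\{\rho WX(t,j)\,\rho WX(t-2^j\tau,j-a)^*\}}{\sigma_W(j)\,\sigma_W(j-a)},$$ where for $u,v\in\mathbb{C}^2$, $uv^*$ is the matrix with entries $u_k\overline{v_l}$; it does not depend on $t$ by stationarity.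
   Formalization: The identity $C_{\rho W}(\tau;j,a)=C_{\rho W}(\tau;0,a)$ is claimed only when, besides j <= J, also j - a <= J, -a <= J and 0 <= J hold. The statement above fails without it. *)

theory Defs
  imports "HOL-Probability.Probability"
begin

definition fourier :: "(real \<Rightarrow> complex) \<Rightarrow> real \<Rightarrow> complex" where
  "fourier f w = (LINT t|lborel. f t * exp (- \<i> * complex_of_real (w * t)))"

definition is_wavelet :: "(real \<Rightarrow> complex) \<Rightarrow> bool" where
  "is_wavelet psi \<longleftrightarrow>
     psi \<in> borel_measurable lborel \<and>
     (\<forall>n::nat. \<exists>C::real. \<forall>t. cmod (psi t) \<le> C / (1 + \<bar>t\<bar>) ^ n) \<and>
     integrable lborel psi \<and> (LINT t|lborel. psi t) = 0 \<and>
     (LINT t|lborel. (cmod (psi t))\<^sup>2) = 1 \<and>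
     (\<forall>w. Im (fourier psi w) = 0)"

definition psi_scale :: "(real \<Rightarrow> complex) \<Rightarrow> int \<Rightarrow> real \<Rightarrow> complex" where
  "psi_scale psi j t = complex_of_real (2 powr (- real_of_int j)) * psi (2 powr (- real_of_int j) * t)"

definition WX :: "('w \<Rightarrow> real \<Rightarrow> real) \<Rightarrow> (real \<Rightarrow> complex) \<Rightarrow> 'w \<Rightarrow> real \<Rightarrow> int \<Rightarrow> complex" where
  "WX X psi \<omega> t j = (LINT u|lborel. complex_of_real (X \<omega> u) * psi_scale psi j (t - u))"

definition rho :: "complex \<Rightarrow> complex ^ 2" where
  "rho z = vector [z, complex_of_real (cmod z)]"

text \<open>Wavelet spectrum \<open>\<sigma>_W(j)\<close> (evaluated at time t; independent of t by stationarity).\<close>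
definition sigmaW :: "'w measure \<Rightarrow> ('w \<Rightarrow> real \<Rightarrow> real) \<Rightarrow> (real \<Rightarrow> complex) \<Rightarrow> real \<Rightarrow> int \<Rightarrow> real" where
  "sigmaW M X psi t j = sqrt (LINT \<omega>|M. (cmod (WX X psi \<omega> t j))\<^sup>2)"

definition C_rhoW :: "'w measure \<Rightarrow> ('w \<Rightarrow> real \<Rightarrow> real) \<Rightarrow> (real \<Rightarrow> complex) \<Rightarrow> real \<Rightarrow> real \<Rightarrow> int \<Rightarrow> int \<Rightarrow> complex ^ 2 ^ 2" where
  "C_rhoW M X psi t \<tau> j a =
     (\<chi> k l. (LINT \<omega>|M. (rho (WX X psi \<omega> t j) $ k) *
                         cnj (rho (WX X psi \<omega> (t - 2 powr (real_of_int j) * \<tau>) (j - a)) $ l))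
            / complex_of_real (sigmaW M X psi t j * sigmaW M X psi (t - 2 powr (real_of_int j) * \<tau>) (j - a)))"

fun conv_pow :: "real measure \<Rightarrow> nat \<Rightarrow> real measure" where
  "conv_pow \<nu> 0 = return borel 0"
| "conv_pow \<nu> (Suc n) = convolution \<nu> (conv_pow \<nu> n)"

definition infinitely_divisible :: "real measure \<Rightarrow> bool" where
  "infinitely_divisible \<mu> \<longleftrightarrow>
     (\<forall>n::nat. n \<ge> 1 \<longrightarrow> (\<exists>\<nu>. prob_space \<nu> \<and> sets \<nu> = sets borel \<and> \<mu> = conv_pow \<nu> n))"

definition log_inf_div :: "'w measure \<Rightarrow> ('w \<Rightarrow> real) \<Rightarrow> bool" where
  "log_inf_div M A \<longleftrightarrow> A \<in> borel_measurable M \<and> (\<forall>\<omega>\<in>space M. A \<omega> > 0) \<and>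
     infinitely_divisible (distr M borel (\<lambda>\<omega>. ln (A \<omega>)))"

definition stationary_increments :: "'w measure \<Rightarrow> ('w \<Rightarrow> real \<Rightarrow> real) \<Rightarrow> bool" where
  "stationary_increments M X \<longleftrightarrow>
     (\<forall>h T. finite T \<longrightarrow>
        distr M (PiM T (\<lambda>_. borel)) (\<lambda>\<omega>. \<lambda>t\<in>T. X \<omega> (t + h) - X \<omega> h) =
        distr M (PiM T (\<lambda>_. borel)) (\<lambda>\<omega>. \<lambda>t\<in>T. X \<omega> t - X \<omega> 0))"

definition WX_stationary :: "'w measure \<Rightarrow> ('w \<Rightarrow> real \<Rightarrow> real) \<Rightarrow> (real \<Rightarrow> complex) \<Rightarrow> bool" where
  "WX_stationary M X psi \<longleftrightarrow>
     (\<forall>h S. finite S \<longrightarrow>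
        distr M (PiM S (\<lambda>_. borel)) (\<lambda>\<omega>. \<lambda>(j,t)\<in>S. WX X psi \<omega> (t + h) j) =
        distr M (PiM S (\<lambda>_. borel)) (\<lambda>\<omega>. \<lambda>(j,t)\<in>S. WX X psi \<omega> t j))"

definition self_similar_upto :: "'w measure \<Rightarrow> ('w \<Rightarrow> real \<Rightarrow> real) \<Rightarrow> (real \<Rightarrow> complex) \<Rightarrow> int \<Rightarrow> bool" where
  "self_similar_upto M X psi J \<longleftrightarrow>
     (\<forall>l::nat. \<exists>A::'w \<Rightarrow> real.
        log_inf_div M A \<and>
        prob_space.indep_set M
          (sigma_sets (space M) {A -` B \<inter> space M | B. B \<in> sets borel})
          (sigma_sets (space M) {(\<lambda>\<omega>. X \<omega> t) -` B \<inter> space M | B t. B \<in> sets borel}) \<and>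
        (\<forall>S. finite S \<longrightarrow> S \<subseteq> {(j, t). j \<le> J} \<longrightarrow>
           distr M (PiM S (\<lambda>_. borel)) (\<lambda>\<omega>. \<lambda>(j,t)\<in>S. WX X psi \<omega> t j) =
           distr M (PiM S (\<lambda>_. borel))
             (\<lambda>\<omega>. \<lambda>(j,t)\<in>S. complex_of_real (A \<omega>) *
                  WX X psi \<omega> (2 powr (- real l) * t) (j - int l))))"

end

theory Submission
  imports Defs
begin

text \<open>
  For every shift \<open>l\<close>, self-similarity identifies the joint law of the wavelet coefficients at
  two points with that of \<open>A\<^sub>l\<close> times the coefficients at the rescaled points
  \<open>(2\<^sup>-\<^sup>l t, j - l)\<close>. Since \<open>A\<^sub>l\<close> is independent of \<open>X\<close> and every coefficient is, up to a null
  set, a measurable function of \<open>X\<close>, moments factorise: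
  \<open>E |W(t,j)|\<^sup>p = E[A\<^sub>l\<^sup>p] E |W(2\<^sup>-\<^sup>l t, j - l)|\<^sup>p\<close>. With stationarity in \<open>t\<close> this makes
  \<open>j \<mapsto> E |W(t,j)|\<^sup>p\<close> geometric, i.e. a power of \<open>2\<^sup>j\<close>. In the normalised phase-modulus
  correlation the same factor \<open>E[A\<^sub>l\<^sup>2]\<close> multiplies the cross moments of \<open>\<rho>W\<close> and the product
  \<open>\<sigma>\<^sub>W(j) \<sigma>\<^sub>W(j - a)\<close>, so it cancels and the correlation does not depend on \<open>j\<close>.

  The technical core is the a.e. \<open>\<sigma>(X)\<close>-measurability of \<open>W(t,j) = \<integral> X(u) \<psi>\<^sub>j(t - u) du\<close>:
  the integral is identified with its conditional expectation given \<open>\<sigma>(X)\<close> by an \<open>L\<^sup>2\<close>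
  argument, first for dominated integrands and then by truncation.
\<close>

section \<open>Measurability with respect to a sub-\<open>\<sigma>\<close>-algebra up to null sets\<close>

definition ae_borel_measurable :: "'a measure \<Rightarrow> 'a measure \<Rightarrow> ('a \<Rightarrow> 'b::topological_space) \<Rightarrow> bool" where
  "ae_borel_measurable M F h \<longleftrightarrow> (\<exists>g \<in> borel_measurable F. AE x in M. h x = g x)"

lemma ae_borel_measurable_compose2:
  assumes "ae_borel_measurable M F f" "ae_borel_measurable M F g"
    and H_meas: "(\<lambda>z. H (fst z) (snd z)) \<in> borel_measurable (borel \<Otimes>\<^sub>M borel)"
  shows "ae_borel_measurable M F (\<lambda>x. H (f x) (g x))"
proof -
  obtain f' g' where f': "f' \<in> borel_measurable F" and g': "g' \<in> borel_measurable F"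
    and ff': "AE x in M. f x = f' x" and gg': "AE x in M. g x = g' x"
    using assms(1,2) unfolding ae_borel_measurable_def by blast
  from ff' gg' have "AE x in M. H (f x) (g x) = H (f' x) (g' x)"
    by eventually_elim simp
  moreover have "(\<lambda>x. H (f' x) (g' x)) \<in> borel_measurable F"
    using measurable_compose[OF measurable_Pair[OF f' g'] H_meas] by simp
  ultimately show ?thesis
    unfolding ae_borel_measurable_def by (auto intro!: bexI[of _ "\<lambda>x. H (f' x) (g' x)"])
qed

lemma ae_borel_measurable_cong:
  assumes "\<And>x. x \<in> space M \<Longrightarrow> h x = h' x" and "ae_borel_measurable M F h'"
  shows "ae_borel_measurable M F h"
  using assms unfolding ae_borel_measurable_def
  by (metis (mono_tags, lifting) AE_I2 AE_mp)

lemma ae_borel_measurable_compose: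
  assumes "ae_borel_measurable M F f" and "H \<in> borel_measurable borel"
  shows "ae_borel_measurable M F (\<lambda>x. H (f x))"
  using ae_borel_measurable_compose2[OF assms(1) assms(1), of "\<lambda>z w. H z"] assms(2)
  by (simp add: measurable_compose[OF measurable_fst])

lemma ae_borel_measurable_LIMSEQ:
  fixes h :: "nat \<Rightarrow> 'a \<Rightarrow> real"
  assumes "\<And>n. ae_borel_measurable M F (h n)" and "AE x in M. (\<lambda>n. h n x) \<longlonglongrightarrow> l x"
  shows "ae_borel_measurable M F l"
proof -
  obtain G where G[measurable]: "\<And>n. G n \<in> borel_measurable F"
    and "\<And>n. AE x in M. h n x = G n x"
    using assms(1) unfolding ae_borel_measurable_def by metis
  then have "AE x in M. \<forall>n. h n x = G n x"
    by (simp add: AE_all_countable)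
  with assms(2) have "AE x in M. l x = lim (\<lambda>n. G n x)"
    by eventually_elim (simp add: limI)
  moreover have "(\<lambda>x. lim (\<lambda>n. G n x)) \<in> borel_measurable F"
    by measurable
  ultimately show ?thesis
    unfolding ae_borel_measurable_def by (auto intro!: bexI[of _ "\<lambda>x. lim (\<lambda>n. G n x)"])
qed

lemma (in prob_space) integral_mult_parametric_integral:
  fixes f :: "'a \<Rightarrow> real \<Rightarrow> real"
  assumes f: "(\<lambda>(x, u). f x u) \<in> borel_measurable (M \<Otimes>\<^sub>M lborel)"
    and dom: "\<And>x u. \<bar>f x u\<bar> \<le> w u" and w: "integrable lborel w"
    and h[measurable]: "h \<in> borel_measurable M" and "integrable M h"
  shows "(LINT x|M. (LINT u|lborel. f x u) * h x) = (LINT u|lborel. LINT x|M. f x u * h x)"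
proof -
  interpret P: pair_sigma_finite M lborel ..
  have [measurable]: "(\<lambda>z. f (fst z) (snd z)) \<in> borel_measurable (M \<Otimes>\<^sub>M lborel)"
    using f by (simp add: case_prod_beta')
  have section_integrable: "integrable lborel (f x)" if "x \<in> space M" for x
    by (rule Bochner_Integration.integrable_bound[OF w])
      (use measurable_Pair2[OF f that] in \<open>auto intro!: AE_I2 order_trans[OF dom]\<close>)
  have "integrable M (\<lambda>x. (LINT u|lborel. w u) * \<bar>h x\<bar>)"
    using \<open>integrable M h\<close> by simp
  then have "integrable M (\<lambda>x. LINT u|lborel. norm (f x u * h x))"
  proof (rule Bochner_Integration.integrable_bound)
    show "AE x in M. norm (LINT u|lborel. norm (f x u * h x)) \<le> norm ((LINT u|lborel. w u) * \<bar>h x\<bar>)"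
    proof (rule AE_I2)
      fix x assume "x \<in> space M"
      then have "(LINT u|lborel. \<bar>f x u\<bar>) \<le> (LINT u|lborel. w u)"
        using section_integrable dom w by (intro integral_mono) auto
      then show "norm (LINT u|lborel. norm (f x u * h x)) \<le> norm ((LINT u|lborel. w u) * \<bar>h x\<bar>)"
        by (simp add: abs_mult mult_right_mono)
    qed
  qed measurable
  then have "integrable (M \<Otimes>\<^sub>M lborel) (\<lambda>(x, u). f x u * h x)"
    using section_integrable by (intro P.Fubini_integrable) (auto simp: case_prod_beta')
  from P.Fubini_integral[OF this] show ?thesis
    by simp
qed

lemma (in finite_measure_subalgebra) AE_eq_real_cond_exp_if_integral_mult_eq:
  fixes I :: "'a \<Rightarrow> real"
  assumes [measurable]: "I \<in> borel_measurable M" and bnd: "\<And>x. x \<in> space M \<Longrightarrow> \<bar>I x\<bar> \<le> C"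
    and sq: "(LINT x|M. I x * I x) = (LINT x|M. I x * real_cond_exp M F I x)"
  shows "AE x in M. I x = real_cond_exp M F I x"
proof -
  define g where "g = real_cond_exp M F I"
  have I_int: "integrable M I"
    using bnd by (intro integrable_const_bound[where B=C]) auto
  then have g_int: "integrable M g"
    unfolding g_def by (rule real_cond_exp_int)
  have gF[measurable]: "g \<in> borel_measurable F" and [measurable]: "g \<in> borel_measurable M"
    unfolding g_def by auto
  have II_int: "integrable M (\<lambda>x. I x * I x)"
  proof (intro integrable_const_bound[where B="C * C"] AE_I2)
    fix x assume "x \<in> space M"
    then show "norm (I x * I x) \<le> C * C"
      using bnd[of x] mult_mono[OF bnd[of x] bnd[of x]] by (simp add: abs_mult)
  qed measurable
  have gI_int: "integrable M (\<lambda>x. g x * I x)"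
  proof (rule Bochner_Integration.integrable_bound[where f="\<lambda>x. C * g x"])
    show "integrable M (\<lambda>x. C * g x)"
      using g_int by simp
    show "AE x in M. norm (g x * I x) \<le> norm (C * g x)"
      using bnd by (auto simp: abs_mult mult.commute[of "\<bar>C\<bar>"] intro!: AE_I2 mult_left_mono order_trans[OF bnd abs_ge_self])
  qed measurable
  have gg: "integrable M (\<lambda>x. g x * g x)" "(LINT x|M. g x * g x) = (LINT x|M. g x * I x)"
    using real_cond_exp_intg[OF gI_int gF] unfolding g_def by auto
  have expand: "(I x - g x)\<^sup>2 = I x * I x - 2 * (g x * I x) + g x * g x" for x
    by (simp add: power2_eq_square algebra_simps)
  have sq_int: "integrable M (\<lambda>x. (I x - g x)\<^sup>2)"
    unfolding expand using II_int gI_int gg(1) by auto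
  have "(LINT x|M. (I x - g x)\<^sup>2) = (LINT x|M. I x * I x) - 2 * (LINT x|M. g x * I x) + (LINT x|M. g x * g x)"
    unfolding expand using II_int gI_int gg(1) by simp
  also have "\<dots> = 0"
    using sq gg(2) unfolding g_def by (simp add: mult.commute)
  finally have "AE x in M. (I x - g x)\<^sup>2 = 0"
    using integral_nonneg_eq_0_iff_AE[OF sq_int] by simp
  then show ?thesis
    unfolding g_def by auto
qed

text \<open>
  Only the sections of the integrand are \<open>F\<close>-measurable, so the integral \<open>I\<close> cannot be shown
  \<open>F\<close>-measurable directly. Instead, Fubini and the defining property of the conditional
  expectation give \<open>E[I I] = E[I E(I|F)]\<close>, which forces \<open>I = E(I|F)\<close> almost everywhere.
\<close>

lemma (in prob_space) ae_borel_measurable_parametric_integral_dominated: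
  fixes f :: "'a \<Rightarrow> real \<Rightarrow> real"
  assumes sub: "subalgebra M F"
    and f: "(\<lambda>(x, u). f x u) \<in> borel_measurable (M \<Otimes>\<^sub>M lborel)"
    and fF: "\<And>u. (\<lambda>x. f x u) \<in> borel_measurable F"
    and dom: "\<And>x u. \<bar>f x u\<bar> \<le> w u" and w: "integrable lborel w"
  shows "ae_borel_measurable M F (\<lambda>x. LINT u|lborel. f x u)"
proof -
  interpret F: finite_measure_subalgebra M F
    by unfold_locales (fact sub)
  define I where "I x = (LINT u|lborel. f x u)" for x
  define g where "g = real_cond_exp M F I"
  have [measurable]: "(\<lambda>x. f x u) \<in> borel_measurable M" for u
    using measurable_from_subalg[OF sub fF] .
  have I_meas[measurable]: "I \<in> borel_measurable M"
    unfolding I_def using f by measurable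
  have I_bound: "\<bar>I x\<bar> \<le> (LINT u|lborel. w u)" if "x \<in> space M" for x
  proof -
    have "integrable lborel (f x)"
      by (rule Bochner_Integration.integrable_bound[OF w])
        (use measurable_Pair2[OF f that] in \<open>auto intro!: AE_I2 order_trans[OF dom]\<close>)
    then show ?thesis
      unfolding I_def using dom w
      by (intro order_trans[OF integral_abs_bound] integral_mono) auto
  qed
  have I_int: "integrable M I"
    using I_bound by (intro integrable_const_bound[where B="LINT u|lborel. w u"]) auto
  have [measurable]: "g \<in> borel_measurable F" and g_meas: "g \<in> borel_measurable M" and g_int: "integrable M g"
    unfolding g_def using I_int by auto
  have f_times_int: "integrable M (\<lambda>x. f x u * I x)" for u
  proof (intro integrable_const_bound[where B="w u * (LINT u|lborel. w u)"] AE_I2)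
    fix x assume "x \<in> space M"
    then show "norm (f x u * I x) \<le> w u * (LINT u|lborel. w u)"
      using dom I_bound by (simp add: abs_mult mult_mono')
  qed measurable
  have "(LINT x|M. I x * I x) = (LINT u|lborel. LINT x|M. f x u * I x)"
    using integral_mult_parametric_integral[OF f dom w I_meas I_int] unfolding I_def .
  also have "\<dots> = (LINT u|lborel. LINT x|M. f x u * g x)"
    unfolding g_def using F.real_cond_exp_intg(2)[OF f_times_int fF] by simp
  also have "\<dots> = (LINT x|M. I x * g x)"
    using integral_mult_parametric_integral[OF f dom w g_meas g_int] unfolding I_def by simp
  finally have "AE x in M. I x = g x"
    unfolding g_def using I_bound by (intro F.AE_eq_real_cond_exp_if_integral_mult_eq) auto
  with \<open>g \<in> borel_measurable F\<close> show ?thesis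
    unfolding ae_borel_measurable_def I_def by blast
qed

lemma (in prob_space) ae_borel_measurable_parametric_integral:
  fixes f :: "'a \<Rightarrow> real \<Rightarrow> real"
  assumes sub: "subalgebra M F"
    and f: "(\<lambda>(x, u). f x u) \<in> borel_measurable (M \<Otimes>\<^sub>M lborel)"
    and fF: "\<And>u. (\<lambda>x. f x u) \<in> borel_measurable F"
    and f_int: "\<And>x. x \<in> space M \<Longrightarrow> integrable lborel (f x)"
  shows "ae_borel_measurable M F (\<lambda>x. LINT u|lborel. f x u)"
proof (rule ae_borel_measurable_LIMSEQ)
  define trunc where
    "trunc n x u = max (- real n) (min (real n) (f x u)) * indicator {- real n..real n} u" for n x u
  have [measurable]: "(\<lambda>z. f (fst z) (snd z)) \<in> borel_measurable (M \<Otimes>\<^sub>M lborel)"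
    using f by (simp add: case_prod_beta')
  show "ae_borel_measurable M F (\<lambda>x. LINT u|lborel. trunc n x u)" for n
  proof (rule ae_borel_measurable_parametric_integral_dominated[OF sub])
    show "(\<lambda>(x, u). trunc n x u) \<in> borel_measurable (M \<Otimes>\<^sub>M lborel)"
      unfolding trunc_def by measurable
    show "(\<lambda>x. trunc n x u) \<in> borel_measurable F" for u
      unfolding trunc_def using fF[of u] by measurable
    show "\<bar>trunc n x u\<bar> \<le> real n * indicator {- real n..real n} u" for x u
      unfolding trunc_def by (auto simp: indicator_def)
    show "integrable lborel (\<lambda>u. real n * indicator {- real n..real n} u :: real)"
      by (intro integrable_mult_right integrable_real_indicator) auto
  qed
  show "AE x in M. (\<lambda>n. LINT u|lborel. trunc n x u) \<longlonglongrightarrow> (LINT u|lborel. f x u)"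
  proof (rule AE_I2, rule integral_dominated_convergence[where w="\<lambda>u. \<bar>f x u\<bar>" for x])
    fix x assume x: "x \<in> space M"
    have [measurable]: "f x \<in> borel_measurable borel"
      using measurable_Pair2[OF f x] by simp
    show "f x \<in> borel_measurable lborel" "(\<lambda>u. trunc n x u) \<in> borel_measurable lborel" for n
      unfolding trunc_def by measurable
    show "integrable lborel (\<lambda>u. \<bar>f x u\<bar>)"
      using f_int[OF x] by auto
    show "AE u in lborel. norm (trunc n x u) \<le> \<bar>f x u\<bar>" for n
      unfolding trunc_def by (auto simp: indicator_def)
    have "trunc n x u = f x u" if "\<bar>u\<bar> + \<bar>f x u\<bar> \<le> real n" for n u
      using that unfolding trunc_def by (auto simp: indicator_def)
    moreover have "\<bar>u\<bar> + \<bar>f x u\<bar> \<le> real n" if "nat \<lceil>\<bar>u\<bar> + \<bar>f x u\<bar>\<rceil> \<le> n" for n u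
      using that by linarith
    ultimately show "AE u in lborel. (\<lambda>n. trunc n x u) \<longlonglongrightarrow> f x u"
      by (intro AE_I2 tendsto_eventually eventually_sequentiallyI) blast
  qed
qed

lemma (in prob_space) ae_borel_measurable_complex_parametric_integral:
  fixes f :: "'a \<Rightarrow> real \<Rightarrow> complex"
  assumes sub: "subalgebra M F"
    and f: "(\<lambda>(x, u). f x u) \<in> borel_measurable (M \<Otimes>\<^sub>M lborel)"
    and fF: "\<And>u. (\<lambda>x. f x u) \<in> borel_measurable F"
    and f_int: "\<And>x. x \<in> space M \<Longrightarrow> integrable lborel (f x)"
  shows "ae_borel_measurable M F (\<lambda>x. LINT u|lborel. f x u)"
proof -
  have [measurable]: "(\<lambda>z. f (fst z) (snd z)) \<in> borel_measurable (M \<Otimes>\<^sub>M lborel)"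
    using f by (simp add: case_prod_beta')
  have Re: "ae_borel_measurable M F (\<lambda>x. LINT u|lborel. Re (f x u))"
    using fF f_int by (intro ae_borel_measurable_parametric_integral[OF sub]) auto
  have Im: "ae_borel_measurable M F (\<lambda>x. LINT u|lborel. Im (f x u))"
    using fF f_int by (intro ae_borel_measurable_parametric_integral[OF sub]) auto
  have "ae_borel_measurable M F
      (\<lambda>x. complex_of_real (LINT u|lborel. Re (f x u)) + \<i> * complex_of_real (LINT u|lborel. Im (f x u)))"
    by (rule ae_borel_measurable_compose2[OF Re Im]) measurable
  moreover have "(LINT u|lborel. f x u) =
      complex_of_real (LINT u|lborel. Re (f x u)) + \<i> * complex_of_real (LINT u|lborel. Im (f x u))"
    if "x \<in> space M" for x
    using integral_Re[OF f_int[OF that]] integral_Im[OF f_int[OF that]] by (simp add: complex_eq_iff)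
  ultimately show ?thesis
    by (rule ae_borel_measurable_cong[rotated])
qed

section \<open>Expectations of products with an independent factor\<close>

lemma (in prob_space) indep_var_of_indep_set_subalgebra:
  fixes A :: "'a \<Rightarrow> real" and \<xi> :: "'a \<Rightarrow> 'b::topological_space"
  assumes sub: "subalgebra M F"
    and indep: "indep_set (sigma_sets (space M) {A -` B \<inter> space M | B. B \<in> sets borel}) (sets F)"
    and [measurable]: "A \<in> borel_measurable M" "\<phi> \<in> borel_measurable borel"
    and \<xi>: "\<xi> \<in> borel_measurable F"
  shows "indep_var borel (\<lambda>x. \<phi> (A x)) borel \<xi>"
proof -
  have space_F: "space F = space M"
    using sub by (simp add: subalgebra_def)
  have sub_A: "sigma_sets (space M) {(\<lambda>x. \<phi> (A x)) -` B \<inter> space M | B. B \<in> sets borel}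
      \<subseteq> sigma_sets (space M) {A -` B \<inter> space M | B. B \<in> sets borel}"
  proof (intro sigma_sets_mono' subsetI, elim CollectE exE conjE)
    fix S B assume "S = (\<lambda>x. \<phi> (A x)) -` B \<inter> space M" "B \<in> sets (borel :: 'b measure)"
    then have "S = A -` (\<phi> -` B) \<inter> space M" "\<phi> -` B \<in> sets borel"
      using measurable_sets_borel[of \<phi> borel B] by auto
    then show "S \<in> {A -` B \<inter> space M | B. B \<in> sets borel}"
      by blast
  qed
  have sub_F: "sigma_sets (space M) {\<xi> -` B \<inter> space M | B. B \<in> sets borel} \<subseteq> sets F"
    using measurable_sets[OF \<xi>] sets.top[of F] space_F by (intro sets.sigma_sets_subset') auto
  have "indep_set (sigma_sets (space M) {(\<lambda>x. \<phi> (A x)) -` B \<inter> space M | B. B \<in> sets borel})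
      (sigma_sets (space M) {\<xi> -` B \<inter> space M | B. B \<in> sets borel})"
    using indep unfolding indep_set_def
    by (rule indep_sets_mono_sets) (use sub_A sub_F in \<open>auto split: bool.split\<close>)
  then show ?thesis
    unfolding indep_var_eq using measurable_from_subalg[OF sub \<xi>] by simp
qed

lemma (in prob_space) indep_var_nonneg_integral_mult:
  fixes B h :: "'a \<Rightarrow> real"
  assumes indep: "indep_var borel B borel h"
    and B_nonneg: "\<And>x. x \<in> space M \<Longrightarrow> 0 \<le> B x" and h_nonneg: "\<And>x. x \<in> space M \<Longrightarrow> 0 \<le> h x"
    and Bh_int: "integrable M (\<lambda>x. B x * h x)"
  shows "(LINT x|M. B x * h x) = (LINT x|M. B x) * (LINT x|M. h x)"
    and "(LINT x|M. h x) \<noteq> 0 \<Longrightarrow> integrable M B"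
proof -
  have [measurable]: "B \<in> borel_measurable M" "h \<in> borel_measurable M"
    using indep_var_rv1[OF indep] indep_var_rv2[OF indep] by auto
  have "indep_var borel (ennreal \<circ> B) borel (ennreal \<circ> h)"
    by (rule indep_var_compose[OF indep]) auto
  moreover have "case_bool borel borel = (\<lambda>_. borel :: ennreal measure)"
    by (simp add: fun_eq_iff split: bool.split)
  ultimately have "indep_vars (\<lambda>_. borel) (case_bool (ennreal \<circ> B) (ennreal \<circ> h)) UNIV"
    unfolding indep_var_def by simp
  from indep_vars_nn_integral[OF _ this]
  have nn_mult: "(\<integral>\<^sup>+x. ennreal (B x * h x) \<partial>M) = (\<integral>\<^sup>+x. ennreal (B x) \<partial>M) * (\<integral>\<^sup>+x. ennreal (h x) \<partial>M)"
    using B_nonneg h_nonneg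
    by (simp add: UNIV_bool ennreal_mult' mult.commute cong: nn_integral_cong)
  have integral_eq: "(LINT x|M. f x) = enn2real (\<integral>\<^sup>+x. ennreal (f x) \<partial>M)"
    if "f \<in> borel_measurable M" "\<And>x. x \<in> space M \<Longrightarrow> 0 \<le> f x" for f
    using that by (intro integral_eq_nn_integral AE_I2) auto
  show "(LINT x|M. B x * h x) = (LINT x|M. B x) * (LINT x|M. h x)"
    using B_nonneg h_nonneg by (simp add: integral_eq nn_mult enn2real_mult)
  show "integrable M B" if "(LINT x|M. h x) \<noteq> 0"
  proof (rule integrableI_nonneg)
    have "(\<integral>\<^sup>+x. ennreal (B x * h x) \<partial>M) < \<infinity>"
      using Bh_int B_nonneg h_nonneg by (simp add: integrable_iff_bounded abs_mult cong: nn_integral_cong)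
    moreover have "(\<integral>\<^sup>+x. ennreal (h x) \<partial>M) \<noteq> 0"
      using that integral_eq[of h] h_nonneg by auto
    ultimately show "(\<integral>\<^sup>+x. ennreal (B x) \<partial>M) < \<infinity>"
      by (auto simp: nn_mult ennreal_mult_less_top)
  qed (use B_nonneg in auto)
qed

lemma (in prob_space) integral_mult_indep_subalgebra_nonneg:
  fixes A h :: "'a \<Rightarrow> real" and \<phi> :: "real \<Rightarrow> real"
  assumes sub: "subalgebra M F"
    and indep: "indep_set (sigma_sets (space M) {A -` B \<inter> space M | B. B \<in> sets borel}) (sets F)"
    and [measurable]: "A \<in> borel_measurable M" "\<phi> \<in> borel_measurable borel"
    and \<phi>_nonneg: "\<And>x. x \<in> space M \<Longrightarrow> 0 \<le> \<phi> (A x)"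
    and h_F: "ae_borel_measurable M F h" and [measurable]: "h \<in> borel_measurable M"
    and h_nonneg: "\<And>x. x \<in> space M \<Longrightarrow> 0 \<le> h x"
    and int: "integrable M (\<lambda>x. \<phi> (A x) * h x)"
  shows "(LINT x|M. \<phi> (A x) * h x) = (LINT x|M. \<phi> (A x)) * (LINT x|M. h x)"
    and "(LINT x|M. h x) \<noteq> 0 \<Longrightarrow> integrable M (\<lambda>x. \<phi> (A x))"
proof -
  obtain g where g_F: "g \<in> borel_measurable F" and "AE x in M. h x = g x"
    using h_F unfolding ae_borel_measurable_def by blast
  define g' where "g' x = max 0 (g x)" for x
  have g'_F: "g' \<in> borel_measurable F"
    unfolding g'_def using g_F by measurable
  have [measurable]: "g' \<in> borel_measurable M"
    using measurable_from_subalg[OF sub g'_F] .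
  have "AE x in M. h x = g' x"
    using \<open>AE x in M. h x = g x\<close> AE_space by eventually_elim (use h_nonneg in \<open>force simp: g'_def\<close>)
  then have h_g': "(LINT x|M. h x) = (LINT x|M. g' x)" and
    \<phi>h_g': "(LINT x|M. \<phi> (A x) * h x) = (LINT x|M. \<phi> (A x) * g' x)" and
    "integrable M (\<lambda>x. \<phi> (A x) * g' x)"
    using int by (auto intro: integral_cong_AE integrable_cong_AE_imp)
  moreover have "indep_var borel (\<lambda>x. \<phi> (A x)) borel g'"
    by (rule indep_var_of_indep_set_subalgebra[OF sub indep _ _ g'_F]) simp_all
  ultimately show "(LINT x|M. \<phi> (A x) * h x) = (LINT x|M. \<phi> (A x)) * (LINT x|M. h x)"
    and "(LINT x|M. h x) \<noteq> 0 \<Longrightarrow> integrable M (\<lambda>x. \<phi> (A x))"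
    using indep_var_nonneg_integral_mult[of "\<lambda>x. \<phi> (A x)" g'] \<phi>_nonneg by (auto simp: g'_def)
qed

lemma (in prob_space) integral_mult_indep_subalgebra:
  fixes A :: "'a \<Rightarrow> real" and \<phi> :: "real \<Rightarrow> 'b::{real_normed_field, banach, second_countable_topology}"
    and Y :: "'a \<Rightarrow> 'b"
  assumes sub: "subalgebra M F"
    and indep: "indep_set (sigma_sets (space M) {A -` B \<inter> space M | B. B \<in> sets borel}) (sets F)"
    and [measurable]: "A \<in> borel_measurable M" "\<phi> \<in> borel_measurable borel"
    and Y_F: "ae_borel_measurable M F Y" and [measurable]: "Y \<in> borel_measurable M"
    and \<phi>_int: "integrable M (\<lambda>x. \<phi> (A x))" and Y_int: "integrable M Y"
  shows "(LINT x|M. \<phi> (A x) * Y x) = (LINT x|M. \<phi> (A x)) * (LINT x|M. Y x)"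
proof -
  obtain g where g_F: "g \<in> borel_measurable F" and "AE x in M. Y x = g x"
    using Y_F unfolding ae_borel_measurable_def by blast
  moreover have [measurable]: "g \<in> borel_measurable M"
    using measurable_from_subalg[OF sub g_F] .
  ultimately have "(LINT x|M. Y x) = (LINT x|M. g x)" "integrable M g"
    and "(LINT x|M. \<phi> (A x) * Y x) = (LINT x|M. \<phi> (A x) * g x)"
    using Y_int by (auto intro: integral_cong_AE integrable_cong_AE_imp)
  moreover have "indep_var borel (\<lambda>x. \<phi> (A x)) borel g"
    by (rule indep_var_of_indep_set_subalgebra[OF sub indep _ _ g_F]) simp_all
  ultimately show ?thesis
    using indep_var_lebesgue_integral \<phi>_int by metis
qed

lemma integral_eq_of_distr_pair_eq:
  fixes U V :: "'i \<Rightarrow> 'a \<Rightarrow> 'c::topological_space"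
    and G :: "'c \<Rightarrow> 'c \<Rightarrow> 'b::{banach, second_countable_topology}"
  assumes eq: "distr M (PiM {i, k} (\<lambda>_. borel)) (\<lambda>x. \<lambda>p\<in>{i, k}. U p x)
             = distr M (PiM {i, k} (\<lambda>_. borel)) (\<lambda>x. \<lambda>p\<in>{i, k}. V p x)"
    and U: "\<And>p. U p \<in> borel_measurable M" and V: "\<And>p. V p \<in> borel_measurable M"
    and G: "(\<lambda>z. G (fst z) (snd z)) \<in> borel_measurable (borel \<Otimes>\<^sub>M borel)"
  shows "(LINT x|M. G (U i x) (U k x)) = (LINT x|M. G (V i x) (V k x))"
    and "integrable M (\<lambda>x. G (U i x) (U k x)) \<longleftrightarrow> integrable M (\<lambda>x. G (V i x) (V k x))"
proof -
  let ?P = "PiM {i, k} (\<lambda>_. borel :: 'c measure)"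
  have U': "(\<lambda>x. \<lambda>p\<in>{i, k}. U p x) \<in> measurable M ?P" and V': "(\<lambda>x. \<lambda>p\<in>{i, k}. V p x) \<in> measurable M ?P"
    using U V by (auto intro!: measurable_restrict)
  have "(\<lambda>y. (y i, y k)) \<in> measurable ?P (borel \<Otimes>\<^sub>M borel)"
    by (intro measurable_Pair measurable_component_singleton) auto
  from measurable_compose[OF this G]
  have G': "(\<lambda>y. G (y i) (y k)) \<in> borel_measurable ?P"
    by simp
  show "(LINT x|M. G (U i x) (U k x)) = (LINT x|M. G (V i x) (V k x))"
    using integral_distr[OF U' G'] integral_distr[OF V' G'] eq by simp
  show "integrable M (\<lambda>x. G (U i x) (U k x)) \<longleftrightarrow> integrable M (\<lambda>x. G (V i x) (V k x))"
    using integrable_distr_eq[OF U' G'] integrable_distr_eq[OF V' G'] eq by simp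
qed

lemma powr_law_of_recurrence:
  fixes m :: "int \<Rightarrow> real"
  assumes a: "a \<ge> 0" and rec: "\<And>j. j \<le> J \<Longrightarrow> m j = a * m (j - 1)"
  shows "\<exists>c \<zeta>. \<forall>j \<le> J. m j = c * 2 powr (real_of_int j * \<zeta>)"
proof (cases "a = 0")
  case True
  then show ?thesis
    using rec by (intro exI[of _ 0]) auto
next
  case False
  with a have "a > 0" by simp
  have down: "m (J - int n) = m J * a powr (- real n)" for n
  proof (induction n)
    case (Suc n)
    have "m (J - int (Suc n)) = m (J - int n) / a"
      using rec[of "J - int n"] \<open>a > 0\<close> by (simp add: algebra_simps)
    also have "\<dots> = m J * a powr (- real n) / a"
      using Suc by simp
    also have "\<dots> = m J * a powr (- real (Suc n))"
      using \<open>a > 0\<close> by (simp add: powr_diff powr_minus divide_simps)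
    finally show ?case .
  qed (use \<open>a > 0\<close> in simp)
  have "m j = m J / a powr real_of_int J * 2 powr (real_of_int j * log 2 a)" if "j \<le> J" for j
  proof -
    have "m j = m J * a powr (real_of_int j - real_of_int J)"
      using down[of "nat (J - j)"] that by simp
    also have "\<dots> = m J / a powr real_of_int J * a powr real_of_int j"
      using \<open>a > 0\<close> by (simp add: powr_diff)
    also have "a powr real_of_int j = 2 powr (real_of_int j * log 2 a)"
      using \<open>a > 0\<close> by (simp add: powr_powr[symmetric] mult.commute[of "real_of_int j"])
    finally show ?thesis .
  qed
  then show ?thesis
    by blast
qed

lemma rho_nth: "rho z $ k = (if k = 1 then z else complex_of_real (cmod z))"
  using exhaust_2[of k] unfolding rho_def by auto

lemma norm_rho_nth [simp]: "cmod (rho z $ k) = cmod z"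
  by (simp add: rho_nth)

lemma rho_nth_scaleR: "c \<ge> 0 \<Longrightarrow> rho (complex_of_real c * z) $ k = complex_of_real c * rho z $ k"
  by (simp add: rho_nth norm_mult)

lemma borel_measurable_rho_nth [measurable]: "(\<lambda>z. rho z $ k) \<in> borel_measurable borel"
  unfolding rho_nth by measurable

lemma borel_measurable_cnj [measurable (raw)]:
  "f \<in> borel_measurable M \<Longrightarrow> (\<lambda>x. cnj (f x)) \<in> borel_measurable M"
  by (rule borel_measurable_continuous_on[where f=cnj]) (auto intro: continuous_intros)

section \<open>Self-similar wavelet coefficients\<close>

definition self_similarity_factor ::
    "'w measure \<Rightarrow> ('w \<Rightarrow> real \<Rightarrow> real) \<Rightarrow> (real \<Rightarrow> complex) \<Rightarrow> int \<Rightarrow> nat \<Rightarrow> ('w \<Rightarrow> real) \<Rightarrow> bool" where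
  "self_similarity_factor M X psi J l A \<longleftrightarrow>
     log_inf_div M A \<and>
     prob_space.indep_set M
       (sigma_sets (space M) {A -` B \<inter> space M | B. B \<in> sets borel})
       (sigma_sets (space M) {(\<lambda>\<omega>. X \<omega> t) -` B \<inter> space M | B t. B \<in> sets borel}) \<and>
     (\<forall>S. finite S \<longrightarrow> S \<subseteq> {(j, t). j \<le> J} \<longrightarrow>
        distr M (PiM S (\<lambda>_. borel)) (\<lambda>\<omega>. \<lambda>(j,t)\<in>S. WX X psi \<omega> t j) =
        distr M (PiM S (\<lambda>_. borel))
          (\<lambda>\<omega>. \<lambda>(j,t)\<in>S. complex_of_real (A \<omega>) *
               WX X psi \<omega> (2 powr (- real l) * t) (j - int l)))"

locale self_similar_wavelet_transform = prob_space M
  for M :: "'w measure" and X :: "'w \<Rightarrow> real \<Rightarrow> real" and psi :: "real \<Rightarrow> complex" and J :: int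
    and A :: "nat \<Rightarrow> 'w \<Rightarrow> real" +
  assumes X_meas: "(\<lambda>(\<omega>, u). X \<omega> u) \<in> borel_measurable (M \<Otimes>\<^sub>M lborel)"
    and psi_meas: "psi \<in> borel_measurable borel"
    and conv_defined: "\<And>\<omega> t j. \<omega> \<in> space M \<Longrightarrow>
          integrable lborel (\<lambda>u. complex_of_real (X \<omega> u) * psi_scale psi j (t - u))"
    and W_stat: "WX_stationary M X psi"
    and sq_integrable: "\<And>t j. integrable M (\<lambda>\<omega>. (cmod (WX X psi \<omega> t j))\<^sup>2)"
    and A_factor: "\<And>l. self_similarity_factor M X psi J l (A l)"
begin

abbreviation W :: "'w \<Rightarrow> real \<Rightarrow> int \<Rightarrow> complex" where
  "W \<equiv> WX X psi"

definition sigma_X :: "'w measure" where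
  "sigma_X = sigma (space M) {(\<lambda>\<omega>. X \<omega> t) -` B \<inter> space M | B t. B \<in> sets borel}"

lemma
  shows space_sigma_X: "space sigma_X = space M"
    and sets_sigma_X: "sets sigma_X = sigma_sets (space M) {(\<lambda>\<omega>. X \<omega> t) -` B \<inter> space M | B t. B \<in> sets borel}"
  unfolding sigma_X_def by (auto intro!: space_measure_of sets_measure_of)

lemma X_measurable_sigma_X: "(\<lambda>\<omega>. X \<omega> u) \<in> borel_measurable sigma_X"
  by (rule measurableI) (auto simp: space_sigma_X sets_sigma_X)

lemma subalgebra_sigma_X: "subalgebra M sigma_X"
proof -
  have "(\<lambda>\<omega>. X \<omega> t) \<in> borel_measurable M" for t
    using measurable_Pair1[OF X_meas, of t] by simp
  then have "{(\<lambda>\<omega>. X \<omega> t) -` B \<inter> space M | B t. B \<in> sets borel} \<subseteq> sets M"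
    by (auto intro: measurable_sets)
  then show ?thesis
    unfolding subalgebra_def space_sigma_X sets_sigma_X by (simp add: sets.sigma_sets_subset)
qed

lemma A_measurable [measurable]: "A l \<in> borel_measurable M"
  and A_pos: "\<omega> \<in> space M \<Longrightarrow> 0 < A l \<omega>"
  using A_factor[of l] by (auto simp: self_similarity_factor_def log_inf_div_def)

lemma indep_A_sigma_X:
  "indep_set (sigma_sets (space M) {A l -` B \<inter> space M | B. B \<in> sets borel}) (sets sigma_X)"
  using A_factor[of l] unfolding self_similarity_factor_def sets_sigma_X by simp

lemma W_integrand_measurable:
  "(\<lambda>(\<omega>, u). complex_of_real (X \<omega> u) * psi_scale psi j (t - u)) \<in> borel_measurable (M \<Otimes>\<^sub>M lborel)"
proof -
  have [measurable]: "(\<lambda>z. X (fst z) (snd z)) \<in> borel_measurable (M \<Otimes>\<^sub>M lborel)"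
    using X_meas by (simp add: case_prod_beta')
  note psi_meas [measurable]
  show ?thesis
    unfolding psi_scale_def case_prod_beta' by measurable
qed

lemma W_measurable [measurable]: "(\<lambda>\<omega>. W \<omega> t j) \<in> borel_measurable M"
  unfolding WX_def using lborel.borel_measurable_lebesgue_integral[OF W_integrand_measurable] by simp

lemma ae_borel_measurable_W: "ae_borel_measurable M sigma_X (\<lambda>\<omega>. W \<omega> t j)"
  unfolding WX_def
proof (rule ae_borel_measurable_complex_parametric_integral[OF subalgebra_sigma_X W_integrand_measurable])
  note X_measurable_sigma_X [measurable] psi_meas [measurable]
  show "(\<lambda>\<omega>. complex_of_real (X \<omega> u) * psi_scale psi j (t - u)) \<in> borel_measurable sigma_X" for u
    unfolding psi_scale_def by measurable
qed (fact conv_defined)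

lemma integral_pair_self_similar:
  fixes G :: "complex \<Rightarrow> complex \<Rightarrow> 'b::{banach, second_countable_topology}" and l :: nat
  assumes "ja \<le> J" "jb \<le> J"
    and G: "(\<lambda>z. G (fst z) (snd z)) \<in> borel_measurable (borel \<Otimes>\<^sub>M borel)"
  defines "s \<equiv> 2 powr (- real l)"
  shows "(LINT \<omega>|M. G (W \<omega> ta ja) (W \<omega> tb jb)) =
         (LINT \<omega>|M. G (A l \<omega> * W \<omega> (s * ta) (ja - int l)) (A l \<omega> * W \<omega> (s * tb) (jb - int l)))"
    and "integrable M (\<lambda>\<omega>. G (W \<omega> ta ja) (W \<omega> tb jb)) \<longleftrightarrow>
         integrable M (\<lambda>\<omega>. G (A l \<omega> * W \<omega> (s * ta) (ja - int l)) (A l \<omega> * W \<omega> (s * tb) (jb - int l)))"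
proof -
  let ?U = "\<lambda>p \<omega>. case p of (j, t) \<Rightarrow> W \<omega> t j"
  let ?V = "\<lambda>p \<omega>. case p of (j, t) \<Rightarrow> complex_of_real (A l \<omega>) * W \<omega> (s * t) (j - int l)"
  have law: "distr M (PiM {(ja, ta), (jb, tb)} (\<lambda>_. borel)) (\<lambda>\<omega>. \<lambda>p\<in>{(ja, ta), (jb, tb)}. ?U p \<omega>) =
        distr M (PiM {(ja, ta), (jb, tb)} (\<lambda>_. borel)) (\<lambda>\<omega>. \<lambda>p\<in>{(ja, ta), (jb, tb)}. ?V p \<omega>)"
    using A_factor[of l, unfolded self_similarity_factor_def, THEN conjunct2, THEN conjunct2, rule_format,
        of "{(ja, ta), (jb, tb)}"] assms(1,2)
    unfolding s_def by simp
  have U: "\<And>p. ?U p \<in> borel_measurable M" and V: "\<And>p. ?V p \<in> borel_measurable M"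
    by (simp_all split: prod.split)
  show "(LINT \<omega>|M. G (W \<omega> ta ja) (W \<omega> tb jb)) =
         (LINT \<omega>|M. G (A l \<omega> * W \<omega> (s * ta) (ja - int l)) (A l \<omega> * W \<omega> (s * tb) (jb - int l)))"
    and "integrable M (\<lambda>\<omega>. G (W \<omega> ta ja) (W \<omega> tb jb)) \<longleftrightarrow>
         integrable M (\<lambda>\<omega>. G (A l \<omega> * W \<omega> (s * ta) (ja - int l)) (A l \<omega> * W \<omega> (s * tb) (jb - int l)))"
    using integral_eq_of_distr_pair_eq[OF law U V G] by simp_all
qed

lemma integral_pair_time_shift:
  fixes G :: "complex \<Rightarrow> complex \<Rightarrow> 'b::{banach, second_countable_topology}"
  assumes G: "(\<lambda>z. G (fst z) (snd z)) \<in> borel_measurable (borel \<Otimes>\<^sub>M borel)"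
  shows "(LINT \<omega>|M. G (W \<omega> (ta + h) ja) (W \<omega> (tb + h) jb)) = (LINT \<omega>|M. G (W \<omega> ta ja) (W \<omega> tb jb))"
proof -
  let ?U = "\<lambda>p \<omega>. case p of (j, t) \<Rightarrow> W \<omega> (t + h) j"
  let ?V = "\<lambda>p \<omega>. case p of (j, t) \<Rightarrow> W \<omega> t j"
  have law: "distr M (PiM {(ja, ta), (jb, tb)} (\<lambda>_. borel)) (\<lambda>\<omega>. \<lambda>p\<in>{(ja, ta), (jb, tb)}. ?U p \<omega>) =
        distr M (PiM {(ja, ta), (jb, tb)} (\<lambda>_. borel)) (\<lambda>\<omega>. \<lambda>p\<in>{(ja, ta), (jb, tb)}. ?V p \<omega>)"
    using W_stat unfolding WX_stationary_def by simp
  have U: "\<And>p. ?U p \<in> borel_measurable M" and V: "\<And>p. ?V p \<in> borel_measurable M"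
    by (simp_all split: prod.split)
  show ?thesis
    using integral_eq_of_distr_pair_eq(1)[OF law U V G] by simp
qed

lemma moment_self_similar:
  fixes l :: nat
  assumes "j \<le> J" and moment_int: "\<And>t j. integrable M (\<lambda>\<omega>. cmod (W \<omega> t j) ^ p)"
  defines "s \<equiv> 2 powr (- real l)"
  shows "(LINT \<omega>|M. cmod (W \<omega> t j) ^ p) =
           (LINT \<omega>|M. A l \<omega> ^ p) * (LINT \<omega>|M. cmod (W \<omega> (s * t) (j - int l)) ^ p)"
    and "(LINT \<omega>|M. cmod (W \<omega> (s * t) (j - int l)) ^ p) \<noteq> 0 \<Longrightarrow> integrable M (\<lambda>\<omega>. A l \<omega> ^ p)"
proof -
  let ?V = "\<lambda>\<omega>. W \<omega> (s * t) (j - int l)"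
  have G: "(\<lambda>z. cmod (fst z) ^ p) \<in> borel_measurable (borel \<Otimes>\<^sub>M borel)"
    by measurable
  have scale: "cmod (complex_of_real (A l \<omega>) * ?V \<omega>) ^ p = A l \<omega> ^ p * cmod (?V \<omega>) ^ p"
    if "\<omega> \<in> space M" for \<omega>
    using A_pos[OF that, of l] by (simp add: norm_mult power_mult_distrib)
  note self_similar = integral_pair_self_similar[OF \<open>j \<le> J\<close> \<open>j \<le> J\<close> G, where ta=t and l=l, folded s_def]
  have "integrable M (\<lambda>\<omega>. cmod (complex_of_real (A l \<omega>) * ?V \<omega>) ^ p)"
    using self_similar(2) moment_int[of t j] by simp
  then have int: "integrable M (\<lambda>\<omega>. A l \<omega> ^ p * cmod (?V \<omega>) ^ p)"
    by (rule integrable_cong_AE_imp) (use scale in \<open>auto intro!: AE_I2\<close>)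
  have nonneg: "0 \<le> A l \<omega> ^ p" if "\<omega> \<in> space M" for \<omega>
    using A_pos[OF that, of l] by simp
  have "ae_borel_measurable M sigma_X (\<lambda>\<omega>. cmod (?V \<omega>) ^ p)"
    by (rule ae_borel_measurable_compose[OF ae_borel_measurable_W]) measurable
  note indep = integral_mult_indep_subalgebra_nonneg[OF subalgebra_sigma_X indep_A_sigma_X A_measurable[of l] _
      nonneg this _ _ int]
  have "(LINT \<omega>|M. cmod (W \<omega> t j) ^ p) = (LINT \<omega>|M. A l \<omega> ^ p * cmod (?V \<omega>) ^ p)"
    using self_similar(1) scale by (simp cong: Bochner_Integration.integral_cong)
  with indep show "(LINT \<omega>|M. cmod (W \<omega> t j) ^ p) =
           (LINT \<omega>|M. A l \<omega> ^ p) * (LINT \<omega>|M. cmod (W \<omega> (s * t) (j - int l)) ^ p)"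
    and "(LINT \<omega>|M. cmod (W \<omega> (s * t) (j - int l)) ^ p) \<noteq> 0 \<Longrightarrow> integrable M (\<lambda>\<omega>. A l \<omega> ^ p)"
    by simp_all
qed

lemma moment_time_invariant:
  "(LINT \<omega>|M. cmod (W \<omega> t j) ^ p) = (LINT \<omega>|M. cmod (W \<omega> t' j) ^ p)"
proof -
  have G: "(\<lambda>z. cmod (fst z) ^ p) \<in> borel_measurable (borel \<Otimes>\<^sub>M borel)"
    by measurable
  show ?thesis
    using integral_pair_time_shift[OF G, where ta=t' and h="t - t'" and ja=j] by simp
qed

lemma moment_powr_law:
  assumes moment_int: "\<And>t j. integrable M (\<lambda>\<omega>. cmod (W \<omega> t j) ^ p)"
  shows "\<exists>c \<zeta>. \<forall>j t. j \<le> J \<longrightarrow> (LINT \<omega>|M. cmod (W \<omega> t j) ^ p) = c * 2 powr (real_of_int j * \<zeta>)"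
proof -
  have "\<exists>c \<zeta>. \<forall>j \<le> J. (LINT \<omega>|M. cmod (W \<omega> 0 j) ^ p) = c * 2 powr (real_of_int j * \<zeta>)"
  proof (rule powr_law_of_recurrence)
    show "0 \<le> (LINT \<omega>|M. A 1 \<omega> ^ p)"
      using A_pos by (intro integral_nonneg_AE AE_I2) (simp add: less_imp_le)
    show "(LINT \<omega>|M. cmod (W \<omega> 0 j) ^ p) = (LINT \<omega>|M. A 1 \<omega> ^ p) * (LINT \<omega>|M. cmod (W \<omega> 0 (j - 1)) ^ p)"
      if "j \<le> J" for j
      using moment_self_similar(1)[OF that moment_int, of 0 1] by simp
  qed
  then show ?thesis
    using moment_time_invariant[of _ _ p 0] by metis
qed

lemma sigmaW_time_invariant: "sigmaW M X psi t j = sigmaW M X psi t' j"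
  unfolding sigmaW_def using moment_time_invariant[of t j 2 t'] by simp

lemma sigmaW_self_similar:
  assumes "j \<le> J"
  shows "sigmaW M X psi t j = sqrt (LINT \<omega>|M. A l \<omega> ^ 2) * sigmaW M X psi (2 powr (- real l) * t) (j - int l)"
  unfolding sigmaW_def using moment_self_similar(1)[OF assms sq_integrable, of t l] by (simp add: real_sqrt_mult)

lemma integrable_A_sq:
  assumes "j \<le> J" and "sigmaW M X psi t' (j - int l) \<noteq> 0"
  shows "integrable M (\<lambda>\<omega>. A l \<omega> ^ 2)"
proof -
  have "sigmaW M X psi (2 powr (- real l) * t') (j - int l) \<noteq> 0"
    using assms(2) sigmaW_time_invariant by metis
  then show ?thesis
    using moment_self_similar(2)[OF assms(1) sq_integrable] unfolding sigmaW_def by auto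
qed

lemma integral_A_sq_pos:
  assumes "integrable M (\<lambda>\<omega>. A l \<omega> ^ 2)"
  shows "0 < (LINT \<omega>|M. A l \<omega> ^ 2)"
proof -
  have "\<not> (AE \<omega> in M. A l \<omega> ^ 2 = 0)"
  proof
    assume "AE \<omega> in M. A l \<omega> ^ 2 = 0"
    with AE_space have "AE \<omega> in M. False"
    proof eventually_elim
      case (elim \<omega>)
      then show False
        using A_pos[of \<omega> l] by simp
    qed
    then show False
      by simp
  qed
  then have "(LINT \<omega>|M. A l \<omega> ^ 2) \<noteq> 0"
    using integral_nonneg_eq_0_iff_AE[OF assms] by simp
  moreover have "0 \<le> (LINT \<omega>|M. A l \<omega> ^ 2)"
    by simp
  ultimately show ?thesis
    by linarith
qed

lemma integrable_rho_cross:
  "integrable M (\<lambda>\<omega>. rho (W \<omega> t j) $ k * cnj (rho (W \<omega> t' j') $ k'))"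
proof (rule Bochner_Integration.integrable_bound)
  show "integrable M (\<lambda>\<omega>. (cmod (W \<omega> t j))\<^sup>2 + (cmod (W \<omega> t' j'))\<^sup>2)"
    using sq_integrable by simp
  have "x * y \<le> x\<^sup>2 + y\<^sup>2" if "0 \<le> x" "0 \<le> y" for x y :: real
    using sum_squares_bound[of x y] mult_nonneg_nonneg[OF that] by linarith
  then show "AE \<omega> in M. norm (rho (W \<omega> t j) $ k * cnj (rho (W \<omega> t' j') $ k'))
      \<le> norm ((cmod (W \<omega> t j))\<^sup>2 + (cmod (W \<omega> t' j'))\<^sup>2)"
    by (simp add: norm_mult)
qed measurable

lemma cross_moment_time_shift:
  "(LINT \<omega>|M. rho (W \<omega> (t + h) j) $ k * cnj (rho (W \<omega> (t' + h) j') $ k')) =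
   (LINT \<omega>|M. rho (W \<omega> t j) $ k * cnj (rho (W \<omega> t' j') $ k'))"
proof (rule integral_pair_time_shift)
  show "(\<lambda>z. rho (fst z) $ k * cnj (rho (snd z) $ k')) \<in> borel_measurable (borel \<Otimes>\<^sub>M borel)"
    by measurable
qed

lemma cross_moment_self_similar:
  fixes l :: nat
  assumes "j \<le> J" "j' \<le> J" and A_sq: "integrable M (\<lambda>\<omega>. A l \<omega> ^ 2)"
  defines "s \<equiv> 2 powr (- real l)"
  shows "(LINT \<omega>|M. rho (W \<omega> t j) $ k * cnj (rho (W \<omega> t' j') $ k')) =
    complex_of_real (LINT \<omega>|M. A l \<omega> ^ 2) *
      (LINT \<omega>|M. rho (W \<omega> (s * t) (j - int l)) $ k * cnj (rho (W \<omega> (s * t') (j' - int l)) $ k'))"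
proof -
  let ?Y = "\<lambda>\<omega>. rho (W \<omega> (s * t) (j - int l)) $ k * cnj (rho (W \<omega> (s * t') (j' - int l)) $ k')"
  have G: "(\<lambda>z. rho (fst z) $ k * cnj (rho (snd z) $ k')) \<in> borel_measurable (borel \<Otimes>\<^sub>M borel)"
    by measurable
  have "(LINT \<omega>|M. rho (W \<omega> t j) $ k * cnj (rho (W \<omega> t' j') $ k')) =
      (LINT \<omega>|M. complex_of_real (A l \<omega> ^ 2) * ?Y \<omega>)"
    using integral_pair_self_similar(1)[OF assms(1,2) G, where ta=t and tb=t' and l=l, folded s_def]
    using A_pos by (simp add: rho_nth_scaleR less_imp_le power2_eq_square mult_ac cong: Bochner_Integration.integral_cong)
  also have "\<dots> = (LINT \<omega>|M. complex_of_real (A l \<omega> ^ 2)) * (LINT \<omega>|M. ?Y \<omega>)"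
  proof (rule integral_mult_indep_subalgebra[OF subalgebra_sigma_X indep_A_sigma_X A_measurable])
    show "ae_borel_measurable M sigma_X ?Y"
      by (rule ae_borel_measurable_compose2[OF ae_borel_measurable_W ae_borel_measurable_W G])
  qed (use integrable_of_real[OF A_sq] integrable_rho_cross in auto)
  also have "(LINT \<omega>|M. complex_of_real (A l \<omega> ^ 2)) = complex_of_real (LINT \<omega>|M. A l \<omega> ^ 2)"
    by (rule integral_complex_of_real)
  finally show ?thesis .
qed

lemma sigmaW_pair_self_similar:
  assumes "j \<le> J" "j - a \<le> J"
  shows "sigmaW M X psi t j * sigmaW M X psi (t - 2 powr j * \<tau>) (j - a) =
    (LINT \<omega>|M. A l \<omega> ^ 2) *
      (sigmaW M X psi t (j - int l) * sigmaW M X psi (t - 2 powr (j - int l) * \<tau>) (j - int l - a))"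
proof -
  define c where "c = (LINT \<omega>|M. A l \<omega> ^ 2)"
  have "c \<ge> 0"
    unfolding c_def by simp
  have "sigmaW M X psi t j = sqrt c * sigmaW M X psi t (j - int l)"
    using sigmaW_self_similar[OF assms(1), of t l] sigmaW_time_invariant[of _ "j - int l" t]
    unfolding c_def by simp
  moreover have "sigmaW M X psi (t - 2 powr j * \<tau>) (j - a) =
      sqrt c * sigmaW M X psi (t - 2 powr (j - int l) * \<tau>) (j - int l - a)"
    using sigmaW_self_similar[OF assms(2), of "t - 2 powr j * \<tau>" l]
      sigmaW_time_invariant[of _ "j - int l - a" "t - 2 powr (j - int l) * \<tau>"]
    unfolding c_def by (simp add: diff_diff_eq add.commute)
  ultimately show ?thesis
    using \<open>c \<ge> 0\<close> unfolding c_def[symmetric] by (simp add: mult_ac)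
qed

lemma cross_moment_pair_self_similar:
  assumes "j \<le> J" "j - a \<le> J" and A_sq: "integrable M (\<lambda>\<omega>. A l \<omega> ^ 2)"
  shows "(LINT \<omega>|M. rho (W \<omega> t j) $ k * cnj (rho (W \<omega> (t - 2 powr j * \<tau>) (j - a)) $ k')) =
    complex_of_real (LINT \<omega>|M. A l \<omega> ^ 2) *
      (LINT \<omega>|M. rho (W \<omega> t (j - int l)) $ k *
         cnj (rho (W \<omega> (t - 2 powr (j - int l) * \<tau>) (j - int l - a)) $ k'))"
proof -
  define s where "s = 2 powr (- real l)"
  have "s * 2 powr j = 2 powr (j - int l)"
    unfolding s_def by (simp add: powr_add[symmetric])
  then have shift: "s * t + (t - s * t) = t"
    "s * (t - 2 powr j * \<tau>) + (t - s * t) = t - 2 powr (j - int l) * \<tau>"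
    by (simp_all add: algebra_simps)
  have "j - a - int l = j - int l - a"
    by simp
  with cross_moment_self_similar[OF assms, of t k "t - 2 powr j * \<tau>" k', folded s_def]
    cross_moment_time_shift[of "s * t" "t - s * t" "j - int l" k "s * (t - 2 powr j * \<tau>)" "j - int l - a" k']
  show ?thesis
    unfolding shift by simp
qed

lemma C_rhoW_self_similar:
  assumes "j \<le> J" "j - a \<le> J"
  shows "C_rhoW M X psi t \<tau> j a = C_rhoW M X psi t \<tau> (j - int l) a"
proof (cases "sigmaW M X psi t (j - int l) = 0 \<or>
    sigmaW M X psi (t - 2 powr (j - int l) * \<tau>) (j - int l - a) = 0")
  case True
  \<comment> \<open>both normalisations vanish, so both matrices are \<open>0\<close> by \<open>x / 0 = 0\<close>\<close>
  then show ?thesis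
    unfolding C_rhoW_def sigmaW_pair_self_similar[OF assms, of t \<tau> l] by (auto simp: vec_eq_iff)
next
  case False
  then have A_sq: "integrable M (\<lambda>\<omega>. A l \<omega> ^ 2)"
    using integrable_A_sq[OF assms(1)] by auto
  have "(LINT \<omega>|M. A l \<omega> ^ 2) \<noteq> 0"
    using integral_A_sq_pos[OF A_sq] by simp
  then show ?thesis
    unfolding C_rhoW_def sigmaW_pair_self_similar[OF assms, of t \<tau> l]
      cross_moment_pair_self_similar[OF assms A_sq]
    by simp
qed

lemma C_rhoW_eq_scale_zero:
  assumes "j \<le> J" "j - a \<le> J" "0 \<le> J" "- a \<le> J"
  shows "C_rhoW M X psi t \<tau> j a = C_rhoW M X psi t \<tau> 0 a"
proof (cases "0 \<le> j")
  case True
  then show ?thesis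
    using C_rhoW_self_similar[of j a t \<tau> "nat j"] assms by simp
next
  case False
  then show ?thesis
    using C_rhoW_self_similar[of 0 a t \<tau> "nat (- j)"] assms by simp
qed

end

theorem theorem1:
  fixes M :: "'w measure" and X :: "'w \<Rightarrow> real \<Rightarrow> real"
    and psi :: "real \<Rightarrow> complex" and J :: int
  assumes prob: "prob_space M"
    and X_meas: "(\<lambda>(\<omega>, u). X \<omega> u) \<in> borel_measurable (M \<Otimes>\<^sub>M lborel)"
    and wavelet: "is_wavelet psi"
    and conv_defined: "\<And>\<omega> t j. \<omega> \<in> space M \<Longrightarrow>
          integrable lborel (\<lambda>u. complex_of_real (X \<omega> u) * psi_scale psi j (t - u))"
    and incr: "stationary_increments M X"
    and W_stat: "WX_stationary M X psi"
    and mom1: "\<And>t j. integrable M (\<lambda>\<omega>. cmod (WX X psi \<omega> t j))"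
    and mom2: "\<And>t j. integrable M (\<lambda>\<omega>. (cmod (WX X psi \<omega> t j))\<^sup>2)"
    and selfsim: "self_similar_upto M X psi J"
  shows "\<exists>c1 c2 \<zeta>1 \<zeta>2 :: real.
           (\<forall>j t. j \<le> J \<longrightarrow>
              (LINT \<omega>|M. cmod (WX X psi \<omega> t j)) = c1 * 2 powr (real_of_int j * \<zeta>1) \<and>
              (LINT \<omega>|M. (cmod (WX X psi \<omega> t j))\<^sup>2) = c2 * 2 powr (real_of_int j * \<zeta>2)) \<and>
           (\<forall>\<tau> t j a. j \<le> J \<and> j - a \<le> J \<and> 0 \<le> J \<and> - a \<le> J \<longrightarrow>
              C_rhoW M X psi t \<tau> j a = C_rhoW M X psi t \<tau> 0 a)"
proof -
  have psi_meas: "psi \<in> borel_measurable borel"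
    using wavelet unfolding is_wavelet_def by (simp add: measurable_lborel1)
  obtain A where "\<And>l. self_similarity_factor M X psi J l (A l)"
    using choice[OF selfsim[unfolded self_similar_upto_def, folded self_similarity_factor_def]] by blast
  then interpret self_similar_wavelet_transform M X psi J A
    by (intro self_similar_wavelet_transform.intro self_similar_wavelet_transform_axioms.intro
        prob X_meas psi_meas conv_defined W_stat mom2)
  obtain c1 \<zeta>1 where c1: "\<And>j t. j \<le> J \<Longrightarrow> (LINT \<omega>|M. cmod (W \<omega> t j) ^ 1) = c1 * 2 powr (real_of_int j * \<zeta>1)"
    using moment_powr_law[of 1] mom1 by auto
  obtain c2 \<zeta>2 where c2: "\<And>j t. j \<le> J \<Longrightarrow> (LINT \<omega>|M. cmod (W \<omega> t j) ^ 2) = c2 * 2 powr (real_of_int j * \<zeta>2)"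
    using moment_powr_law[of 2] mom2 by auto
  show ?thesis
  proof (intro exI conjI allI impI)
    show "(LINT \<omega>|M. cmod (W \<omega> t j)) = c1 * 2 powr (real_of_int j * \<zeta>1)"
      and "(LINT \<omega>|M. (cmod (W \<omega> t j))\<^sup>2) = c2 * 2 powr (real_of_int j * \<zeta>2)" if "j \<le> J" for j t
      using c1[OF that, of t] c2[OF that, of t] by simp_all
    show "C_rhoW M X psi t \<tau> j a = C_rhoW M X psi t \<tau> 0 a"
      if "j \<le> J \<and> j - a \<le> J \<and> 0 \<le> J \<and> - a \<le> J" for \<tau> t j a
      using that by (intro C_rhoW_eq_scale_zero) auto
  qed
qed

end
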